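(* Let $D,\chi,\varepsilon>0$, $a\ge 0$, $\beta>0$, $b=D\beta^2$, and assume $\frac{a\chi}{D\varepsilon}-\beta^2\le 0$. Then there are no $\rho_0>0$, $\phi_0>0$, $r_0>0$ and functions $\rho\in C^0[0,\infty)$, $\phi\in C^2[0,\infty)$ with $\rho\ge0$, $\phi\ge 0$, such that $\rho(0)=\rho_0$, $\phi(0)=\phi_0$, $\rho>0$ on $[0,r_0)$, $\rho\equiv 0$ on $[r_0,\infty)$, $\rho$ is differentiable on $(0,r_0)$ with $\varepsilon\rho\rho_r=\chi\rho\phi_r$ there, and $D\phi_{rr}+D\frac{\phi_r}{r}+a\rho-b\phi=0$ on $(0,\infty)$.
   Context: The system $\partial_r(\frac{\varepsilon}{2}\rho^2)=\chi\rho\phi_r$, $D\phi_{rr}+D\phi_r/r+a\rho-b\phi=0$ is the radially symmetric stationary form of a hyperbolic-parabolic chemotaxis model on $\mathbb{R}^2$ with pressure $p(\rho)=\frac{\varepsilon}{2}\rho^2$; $r=|x|$. *)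

theory Defs
  imports "HOL-Analysis.Analysis"
begin

definition C2_halfline :: "(real \<Rightarrow> real) \<Rightarrow> (real \<Rightarrow> real) \<Rightarrow> (real \<Rightarrow> real) \<Rightarrow> bool" where
  "C2_halfline f f1 f2 \<longleftrightarrow>
     (\<forall>x\<in>{0..}. (f has_real_derivative f1 x) (at x within {0..})) \<and>
     (\<forall>x\<in>{0..}. (f1 has_real_derivative f2 x) (at x within {0..})) \<and>
     continuous_on {0..} f2"

end

theory Submission
  imports Defs
begin

text \<open>Where \<rho> > 0 the first equation says that \<open>\<epsilon>\<rho> - \<chi>\<phi>\<close> is constant, so
  \<open>\<epsilon>\<rho> = \<chi>(\<phi> - \<phi>(r\<^sub>0))\<close> on \<open>[0, r\<^sub>0]\<close>; since \<rho>(0) > 0 this forces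
  \<open>\<phi>(r\<^sub>0) < \<phi>(0)\<close>. On the other hand the same relation and the smallness condition give
  \<open>a\<rho> \<le> b\<phi>\<close>, so the radial Laplacian \<open>\<phi>\<^sub>r\<^sub>r + \<phi>\<^sub>r/r = (b\<phi> - a\<rho>)/D\<close> is
  nonnegative there. Hence \<open>r\<phi>\<^sub>r\<close> is nondecreasing from its value 0 at the centre,
  \<open>\<phi>\<close> is nondecreasing on \<open>[0, r\<^sub>0]\<close>, and \<open>\<phi>(0) \<le> \<phi>(r\<^sub>0)\<close>: a contradiction.\<close>

lemma C2_halfline_continuous_on:
  assumes "C2_halfline f f1 f2"
  shows "continuous_on {0..} f" and "continuous_on {0..} f1"
  using assms unfolding C2_halfline_def
  by (meson atLeast_iff continuous_on_eq_continuous_within DERIV_continuous)+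

lemma C2_halfline_has_real_derivative_at:
  assumes "C2_halfline f f1 f2" and "x > 0"
  shows "(f has_real_derivative f1 x) (at x)" and "(f1 has_real_derivative f2 x) (at x)"
proof -
  have "at x within {0..} = at x"
    using \<open>x > 0\<close> by (intro at_within_interior) simp
  moreover have "x \<in> {0..}"
    using \<open>x > 0\<close> by simp
  ultimately show "(f has_real_derivative f1 x) (at x)" and "(f1 has_real_derivative f2 x) (at x)"
    using assms(1) unfolding C2_halfline_def by metis+
qed

lemma chemotactic_balance_const:
  fixes \<rho> \<phi> \<phi>1 :: "real \<Rightarrow> real"
  assumes "s < t" "continuous_on {s..t} \<rho>" "continuous_on {s..t} \<phi>"
    and "\<And>x. x \<in> {s<..<t} \<Longrightarrow> \<rho> differentiable (at x)"
    and "\<And>x. x \<in> {s<..<t} \<Longrightarrow> (\<phi> has_real_derivative \<phi>1 x) (at x)"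
    and "\<And>x. x \<in> {s<..<t} \<Longrightarrow> \<rho> x \<noteq> 0"
    and "\<And>x. x \<in> {s<..<t} \<Longrightarrow> eps * \<rho> x * deriv \<rho> x = chi * \<rho> x * \<phi>1 x"
    and "x \<in> {s..t}"
  shows "eps * \<rho> x - chi * \<phi> x = eps * \<rho> s - chi * \<phi> s"
proof -
  let ?h = "\<lambda>x. eps * \<rho> x - chi * \<phi> x"
  have "DERIV ?h y :> 0" if "s < y" "y < t" for y
  proof -
    have "DERIV \<rho> y :> deriv \<rho> y"
      using assms(4) that by (simp add: DERIV_deriv_iff_real_differentiable)
    then have "DERIV ?h y :> eps * deriv \<rho> y - chi * \<phi>1 y"
      using assms(5) that by (auto intro!: derivative_eq_intros)
    moreover have "eps * deriv \<rho> y = chi * \<phi>1 y"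
      using assms(6,7) that by (simp add: mult.left_commute[of _ "\<rho> y"])
    ultimately show ?thesis by simp
  qed
  then show ?thesis
    using assms(1-3,8) by (intro DERIV_isconst2[of s t ?h]) (auto intro!: continuous_intros)
qed

lemma radial_flux_nonneg:
  fixes \<phi>1 \<phi>2 :: "real \<Rightarrow> real"
  assumes "continuous_on {0..R} \<phi>1"
    and "\<And>x. x \<in> {0<..<R} \<Longrightarrow> (\<phi>1 has_real_derivative \<phi>2 x) (at x)"
    and "\<And>x. x \<in> {0<..<R} \<Longrightarrow> \<phi>2 x + \<phi>1 x / x \<ge> 0"
    and "0 < x" "x \<le> R"
  shows "\<phi>1 x \<ge> 0"
proof -
  let ?g = "\<lambda>r. r * \<phi>1 r"
  have "?g 0 \<le> ?g x"
  proof (rule DERIV_nonneg_imp_increasing_open[of 0 x ?g])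
    fix y assume y: "0 < y" "y < x"
    have "DERIV ?g y :> \<phi>1 y + y * \<phi>2 y"
      using assms(2) y \<open>x \<le> R\<close> by (auto intro!: derivative_eq_intros)
    moreover have "\<phi>1 y + y * \<phi>2 y = y * (\<phi>2 y + \<phi>1 y / y)"
      using y by (simp add: field_simps)
    moreover have "y * (\<phi>2 y + \<phi>1 y / y) \<ge> 0"
      using assms(3) y \<open>x \<le> R\<close> by simp
    ultimately show "\<exists>d. DERIV ?g y :> d \<and> d \<ge> 0" by auto
  next
    show "continuous_on {0..x} ?g"
      using assms(1) \<open>x \<le> R\<close> by (auto intro!: continuous_intros elim: continuous_on_subset)
  qed (use \<open>0 < x\<close> in simp)
  then show ?thesis
    using \<open>0 < x\<close> by (simp add: zero_le_mult_iff)
qed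

lemma radial_subharmonic_centre_le:
  fixes \<phi> \<phi>1 \<phi>2 :: "real \<Rightarrow> real"
  assumes "0 \<le> R" "continuous_on {0..R} \<phi>" "continuous_on {0..R} \<phi>1"
    and "\<And>x. x \<in> {0<..<R} \<Longrightarrow> (\<phi> has_real_derivative \<phi>1 x) (at x)"
    and "\<And>x. x \<in> {0<..<R} \<Longrightarrow> (\<phi>1 has_real_derivative \<phi>2 x) (at x)"
    and "\<And>x. x \<in> {0<..<R} \<Longrightarrow> \<phi>2 x + \<phi>1 x / x \<ge> 0"
  shows "\<phi> 0 \<le> \<phi> R"
proof (rule DERIV_nonneg_imp_increasing_open[OF \<open>0 \<le> R\<close> _ assms(2)])
  fix y assume "0 < y" "y < R"
  then show "\<exists>d. DERIV \<phi> y :> d \<and> d \<ge> 0"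
    using assms(4) radial_flux_nonneg[OF assms(3,5,6), of y] by auto
qed

lemma production_le_degradation:
  fixes D chi eps a \<beta> :: real
  assumes "D > 0" "eps > 0" "a \<ge> 0" "a * chi / (D * eps) - \<beta>\<^sup>2 \<le> 0"
    and "eps * \<rho> = chi * (p - q)" "chi \<ge> 0" "p \<ge> 0" "q \<ge> 0"
  shows "a * \<rho> \<le> D * \<beta>\<^sup>2 * p"
proof -
  have "a * chi / eps \<le> D * \<beta>\<^sup>2"
    using assms(1,2,4) by (simp add: field_simps)
  then have "(a * chi / eps) * p \<le> D * \<beta>\<^sup>2 * p"
    using \<open>p \<ge> 0\<close> by (rule mult_right_mono)
  moreover have "a * \<rho> = (a * chi / eps) * p - (a * chi / eps) * q"
  proof -
    have "a * \<rho> = (a / eps) * (eps * \<rho>)"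
      using \<open>eps > 0\<close> by simp
    also have "\<dots> = (a * chi / eps) * p - (a * chi / eps) * q"
      unfolding assms(5) by (simp add: algebra_simps)
    finally show ?thesis .
  qed
  moreover have "(a * chi / eps) * q \<ge> 0"
    using assms(2,3,6,8) by simp
  ultimately show ?thesis by linarith
qed

theorem mainTheorem2:
  fixes D chi eps a \<beta> b :: real
  assumes "D > 0" "chi > 0" "eps > 0" "a \<ge> 0" "\<beta> > 0" "b = D * \<beta>\<^sup>2"
    and "a * chi / (D * eps) - \<beta>\<^sup>2 \<le> 0"
  shows "\<not> (\<exists>(\<rho>0::real) (\<phi>0::real) (r0::real) (\<rho>::real \<Rightarrow> real) (\<phi>::real \<Rightarrow> real) \<phi>1 \<phi>2.
            \<rho>0 > 0 \<and> \<phi>0 > 0 \<and> r0 > 0 \<and>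
            continuous_on {0..} \<rho> \<and> C2_halfline \<phi> \<phi>1 \<phi>2 \<and>
            (\<forall>r\<ge>0. \<rho> r \<ge> 0 \<and> \<phi> r \<ge> 0) \<and>
            \<rho> 0 = \<rho>0 \<and> \<phi> 0 = \<phi>0 \<and>
            (\<forall>r\<in>{0..<r0}. \<rho> r > 0) \<and>
            (\<forall>r\<ge>r0. \<rho> r = 0) \<and>
            (\<forall>r\<in>{0<..<r0}. \<rho> differentiable (at r) \<and>
                eps * \<rho> r * deriv \<rho> r = chi * \<rho> r * \<phi>1 r) \<and>
            (\<forall>r>0. D * \<phi>2 r + D * \<phi>1 r / r + a * \<rho> r - b * \<phi> r = 0))"
proof (intro notI, elim exE conjE)
  fix \<rho>0 \<phi>0 r0 \<rho> \<phi> \<phi>1 \<phi>2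
  assume "r0 > 0" "\<rho> 0 = \<rho>0" "\<rho>0 > 0" and \<rho>_cont: "continuous_on {0..} \<rho>"
    and \<phi>_C2: "C2_halfline \<phi> \<phi>1 \<phi>2" and nonneg: "\<forall>r\<ge>0. \<rho> r \<ge> 0 \<and> \<phi> r \<ge> 0"
    and \<rho>_pos: "\<forall>r\<in>{0..<r0}. \<rho> r > 0" and \<rho>_zero: "\<forall>r\<ge>r0. \<rho> r = 0"
    and \<rho>_eq: "\<forall>r\<in>{0<..<r0}. \<rho> differentiable (at r) \<and>
                eps * \<rho> r * deriv \<rho> r = chi * \<rho> r * \<phi>1 r"
    and \<phi>_eq: "\<forall>r>0. D * \<phi>2 r + D * \<phi>1 r / r + a * \<rho> r - b * \<phi> r = 0"
  note \<phi>_cont = C2_halfline_continuous_on[OF \<phi>_C2]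
  note \<phi>_deriv = C2_halfline_has_real_derivative_at[OF \<phi>_C2]
  have balance: "eps * \<rho> r - chi * \<phi> r = eps * \<rho> 0 - chi * \<phi> 0" if "r \<in> {0..r0}" for r
  proof (rule chemotactic_balance_const[OF \<open>r0 > 0\<close> _ _ _ _ _ _ that])
    show "continuous_on {0..r0} \<rho>" "continuous_on {0..r0} \<phi>"
      by (auto intro: continuous_on_subset[OF \<rho>_cont] continuous_on_subset[OF \<phi>_cont(1)])
    show "\<rho> x \<noteq> 0" if "x \<in> {0<..<r0}" for x
      using \<rho>_pos that by (metis atLeastLessThan_iff greaterThanLessThan_iff less_imp_le less_irrefl)
  qed (use \<rho>_eq \<phi>_deriv in auto)
  have "chi * (\<phi> 0 - \<phi> r0) = eps * \<rho>0"
    using balance[of r0] \<rho>_zero \<open>r0 > 0\<close> \<open>\<rho> 0 = \<rho>0\<close> by (simp add: algebra_simps)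
  then have "chi * (\<phi> 0 - \<phi> r0) > 0"
    using \<open>\<rho>0 > 0\<close> \<open>eps > 0\<close> by simp
  then have "\<phi> r0 < \<phi> 0"
    using \<open>chi > 0\<close> by (simp add: zero_less_mult_iff)
  moreover have "\<phi> 0 \<le> \<phi> r0"
  proof (rule radial_subharmonic_centre_le)
    fix x assume x: "x \<in> {0<..<r0}"
    have "eps * \<rho> x = chi * (\<phi> x - \<phi> r0)"
      using balance[of x] balance[of r0] \<rho>_zero x by (simp add: algebra_simps)
    then have "a * \<rho> x \<le> b * \<phi> x"
      using production_le_degradation[of D eps a chi \<beta>] assms nonneg x \<open>r0 > 0\<close> by simp
    moreover have "D * (\<phi>2 x + \<phi>1 x / x) = b * \<phi> x - a * \<rho> x"
      using \<phi>_eq x by (simp add: algebra_simps)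
    ultimately have "D * (\<phi>2 x + \<phi>1 x / x) \<ge> 0"
      by simp
    then show "\<phi>2 x + \<phi>1 x / x \<ge> 0"
      using \<open>D > 0\<close> by (simp add: zero_le_mult_iff)
  next
    show "continuous_on {0..r0} \<phi>" "continuous_on {0..r0} \<phi>1"
      by (auto intro: continuous_on_subset[OF \<phi>_cont(1)] continuous_on_subset[OF \<phi>_cont(2)])
  qed (use \<open>r0 > 0\<close> \<phi>_deriv in simp_all)
  ultimately show False by simp
qed

end
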